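(* Let $n \geq 1$ and let $G$ be a simple graph on the vertex set $[n]=\{1,\ldots,n\}$. Let $\mathcal{S}_{n,G}$ be the arrangement of affine hyperplanes in $\mathbb{R}^n$ consisting of the hyperplanes $x_i - x_j = 0$ for all $1 \leq i < j \leq n$, together with the hyperplanes $x_i - x_j = 1$ for all $1 \leq i < j \leq n$ such that $\{i,j\}$ is an edge of $G$. Let $\mathbb{Z}_{n+1}$ be the group of integers modulo $n+1$ and let $H$ be the cyclic subgroup of $\mathbb{Z}_{n+1}^n$ generated by $(1,1,\ldots,1)$. Then the regions of $\mathcal{S}_{n,G}$ are in bijection with the cosets $(a_1,\ldots,a_n)+H \in \mathbb{Z}_{n+1}^n/H$ satisfying the following condition: for every $i \in [n]$, if there exists $j$ with $i<j$ and $a_i=a_j$, and $j$ is the smallest such integer, then $\{i,j\}$ is an edge of $G$.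
   Context: A region of a finite arrangement of affine hyperplanes in $\mathbb{R}^n$ is a connected component of the complement in $\mathbb{R}^n$ of the union of the hyperplanes. The condition on cosets is well defined since adding $(1,\ldots,1)$ preserves which coordinates are equal. *)

theory Defs
  imports "HOL-Analysis.Analysis"
begin

text \<open>Coordinates of R^n are indexed by a finite linearly ordered type 'n
  (order-isomorphic to [n] with n = CARD('n)).\<close>

definition simple_graph_edges :: "'a set set \<Rightarrow> bool" where
  "simple_graph_edges E \<longleftrightarrow> (\<forall>e\<in>E. card e = 2)"

definition arrS :: "('n::{finite,linorder}) set set \<Rightarrow> (real ^ ('n::{finite,linorder})) set set" where
  "arrS E = {{x. x $ i - x $ j = 0} | i j. i < j}
          \<union> {{x. x $ i - x $ j = 1} | i j. i < j \<and> {i, j} \<in> E}"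

definition regions :: "(real ^ 'n::finite) set set \<Rightarrow> (real ^ 'n) set set" where
  "regions A = components (UNIV - \<Union>A)"

text \<open>Z_{n+1}^n, elements represented with coordinates in {0..n}, n = CARD('n).\<close>
definition zvecs :: "('n::finite \<Rightarrow> nat) set" where
  "zvecs = {a. \<forall>i. a i < CARD('n) + 1}"

text \<open>Congruence modulo H = <(1,...,1)>.\<close>
definition cosetrel :: "(('n::finite \<Rightarrow> nat) \<times> ('n \<Rightarrow> nat)) set" where
  "cosetrel = {(a, b). a \<in> zvecs \<and> b \<in> zvecs \<and>
       (\<exists>c::nat. \<forall>i. b i = (a i + c) mod (CARD('n) + 1))}"

definition cosets :: "('n::finite \<Rightarrow> nat) set set" where
  "cosets = zvecs // cosetrel"

definition good_vec :: "('n::{finite,linorder}) set set \<Rightarrow> ('n \<Rightarrow> nat) \<Rightarrow> bool" where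
  "good_vec E a \<longleftrightarrow> (\<forall>i. (\<exists>j. i < j \<and> a i = a j) \<longrightarrow>
       {i, LEAST j. i < j \<and> a i = a j} \<in> E)"

definition good_cosets :: "('n::{finite,linorder}) set set \<Rightarrow> ('n \<Rightarrow> nat) set set" where
  "good_cosets E = {C \<in> cosets. \<forall>a\<in>C. good_vec E a}"

end

theory Submission
  imports Defs
begin

text \<open>Up to its region, a point \<open>x\<close> off the arrangement is given by the order of its coordinates
  and, for each edge \<open>{i, j}\<close> with \<open>i < j\<close> and \<open>x\<^sub>j < x\<^sub>i\<close>, by the side of
  \<open>x\<^sub>i - x\<^sub>j = 1\<close> it lies on. Among the edges with \<open>0 < x\<^sub>i - x\<^sub>j < 1\<close>, those whose interval
  \<open>[x\<^sub>j, x\<^sub>i]\<close> is maximal form chains \<open>i\<^sub>1 < i\<^sub>2 < \<dots>\<close> along which \<open>x\<close> decreases. Labelling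
  each index by the smallest rank of a coordinate on its chain gives a parking function whose level
  sets are these chains, so it satisfies the condition of the theorem; and the coordinate order is
  recovered from the label as its unique "queue ranking", so the label determines the region.
  Conversely, every parking function satisfying the condition is the label of a point, built from
  its queue ranking by realising the prescribed pattern of distances below and above \<open>1\<close>. Finally,
  each coset of \<open>H\<close> contains exactly one parking function (Pollak's cyclic argument).\<close>

section \<open>Regions as classes of generic points\<close>

definition generic :: "('n::{finite,linorder}) set set \<Rightarrow> real^('n::{finite,linorder}) \<Rightarrow> bool" where
  "generic E x \<longleftrightarrow> inj (($) x) \<and> (\<forall>i j. i < j \<and> {i, j} \<in> E \<longrightarrow> x$i - x$j \<noteq> 1)"

lemma complement_arrS:
  fixes E :: "('n::{finite,linorder}) set set"
  shows "UNIV - \<Union>(arrS E) = {x. generic E x}"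
proof -
  have "x \<in> \<Union>(arrS E) \<longleftrightarrow> \<not> generic E x" for x
  proof -
    have "\<not> inj (($) x) \<longleftrightarrow> (\<exists>i j. i < j \<and> x$i - x$j = 0)"
    proof
      assume "\<not> inj (($) x)"
      then obtain i j where "i \<noteq> j" "x$i = x$j"
        unfolding inj_def by blast
      then have "i < j \<and> x$i - x$j = 0 \<or> j < i \<and> x$j - x$i = 0"
        by auto
      then show "\<exists>i j. i < j \<and> x$i - x$j = 0"
        by blast
    qed (auto simp: inj_def)
    then show ?thesis
      unfolding generic_def arrS_def by blast
  qed
  then show ?thesis by blast
qed

definition same_side :: "('n::{finite,linorder}) set set \<Rightarrow>
    real^('n::{finite,linorder}) \<Rightarrow> real^('n::{finite,linorder}) \<Rightarrow> bool" where
  "same_side E x y \<longleftrightarrow> (\<forall>i j. x$i < x$j \<longleftrightarrow> y$i < y$j) \<and>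
     (\<forall>i j. i < j \<and> {i, j} \<in> E \<longrightarrow> (x$i - x$j < 1 \<longleftrightarrow> y$i - y$j < 1))"

lemma connected_level_same_side:
  fixes h :: "'a::topological_space \<Rightarrow> real"
  assumes "connected C" "continuous_on C h" "c \<notin> h ` C" "x \<in> C" "y \<in> C"
  shows "h x < c \<longleftrightarrow> h y < c"
proof -
  have "connected (h ` C)"
    using assms(2,1) by (rule connected_continuous_image)
  then have "\<And>p q. p \<in> h ` C \<Longrightarrow> q \<in> h ` C \<Longrightarrow> p \<le> c \<Longrightarrow> c \<le> q \<Longrightarrow> False"
    using assms(3) unfolding connected_iff_interval by blast
  then show ?thesis
    using assms(4,5) by (meson image_eqI less_le_not_le nle_le)
qed

lemma same_side_if_connected:
  assumes "connected C" "C \<subseteq> {z. generic E z}" "x \<in> C" "y \<in> C"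
  shows "same_side E x y"
proof -
  have diff: "(x$i - x$j < c) \<longleftrightarrow> (y$i - y$j < c)" if "\<forall>z\<in>C. z$i - z$j \<noteq> c" for i j c
  proof (rule connected_level_same_side[OF assms(1) _ _ assms(3,4)])
    show "continuous_on C (\<lambda>z. z$i - z$j)"
      by (intro continuous_intros)
  qed (use that in auto)
  have "x$i < x$j \<longleftrightarrow> y$i < y$j" for i j
  proof (cases "i = j")
    case False
    then have "\<forall>z\<in>C. z$i - z$j \<noteq> 0"
      using assms(2) unfolding generic_def inj_def by auto
    then show ?thesis using diff by fastforce
  qed simp
  moreover have "x$i - x$j < 1 \<longleftrightarrow> y$i - y$j < 1" if "i < j" "{i, j} \<in> E" for i j
    using diff assms(2) that unfolding generic_def by blast
  ultimately show ?thesis unfolding same_side_def by blast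
qed

lemma convex_comb_avoids_level:
  fixes a b c u :: real
  assumes "a < c \<longleftrightarrow> b < c" "a \<noteq> c" "b \<noteq> c" "0 \<le> u" "u \<le> 1"
  shows "(1 - u) * a + u * b \<noteq> c"
  using assms by (smt (verit) convex_bound_le segment_bound_lemma)

lemma closed_segment_generic:
  assumes "generic E x" "generic E y" "same_side E x y"
  shows "closed_segment x y \<subseteq> {z. generic E z}"
proof
  fix z assume "z \<in> closed_segment x y"
  then obtain u where u: "0 \<le> u" "u \<le> 1" and z: "\<And>k. z$k = (1 - u) * x$k + u * y$k"
    unfolding in_segment by auto
  have diff: "z$i - z$j = (1 - u) * (x$i - x$j) + u * (y$i - y$j)" for i j
    unfolding z by (simp add: algebra_simps)
  have "z$i \<noteq> z$j" if "i \<noteq> j" for i j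
  proof -
    have "x$i - x$j \<noteq> 0" "y$i - y$j \<noteq> 0"
      using assms(1,2) that unfolding generic_def inj_def by auto
    moreover have "x$i - x$j < 0 \<longleftrightarrow> y$i - y$j < 0"
      using assms(3) unfolding same_side_def by simp
    ultimately show ?thesis
      using convex_comb_avoids_level[OF _ _ _ u] diff by (metis eq_iff_diff_eq_0)
  qed
  moreover have "z$i - z$j \<noteq> 1" if "i < j" "{i, j} \<in> E" for i j
    using convex_comb_avoids_level[OF _ _ _ u] diff assms that
    unfolding generic_def same_side_def by metis
  ultimately show "z \<in> {z. generic E z}"
    unfolding generic_def inj_def by blast
qed

lemma connected_component_generic:
  assumes "generic E x"
  shows "connected_component_set {z. generic E z} x = {y. generic E y \<and> same_side E x y}"
proof (intro subset_antisym subsetI)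
  fix y assume y: "y \<in> connected_component_set {z. generic E z} x"
  have "x \<in> connected_component_set {z. generic E z} x"
    using assms by simp
  then have "same_side E x y"
    using y
    by (rule same_side_if_connected[OF connected_connected_component connected_component_subset])
  moreover have "generic E y"
    using y connected_component_subset by blast
  ultimately show "y \<in> {y. generic E y \<and> same_side E x y}" by simp
next
  fix y assume "y \<in> {y. generic E y \<and> same_side E x y}"
  then have "closed_segment x y \<subseteq> {z. generic E z}"
    using assms closed_segment_generic by blast
  then have "closed_segment x y \<subseteq> connected_component_set {z. generic E z} x"
    by (simp add: connected_component_maximal)
  then show "y \<in> connected_component_set {z. generic E z} x"
    by (meson ends_in_segment(2) subsetD)
qed

lemma components_eq_connected_component_set:
  assumes "C \<in> components S" "x \<in> C"
  shows "C = connected_component_set S x"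
proof -
  obtain z where "C = connected_component_set S z"
    using assms(1) by (rule componentsE)
  with assms(2) show ?thesis
    using connected_component_eq by blast
qed

lemma bij_betw_components:
  assumes f: "\<And>x y. x \<in> S \<Longrightarrow> y \<in> S \<Longrightarrow> f x = f y \<longleftrightarrow> y \<in> connected_component_set S x"
    and "f ` S = B"
  shows "\<exists>g. bij_betw g (components S) B"
proof -
  define g where "g C = f (SOME x. x \<in> C)" for C
  have g: "g C = f x" if C: "C \<in> components S" and "x \<in> C" for C x
  proof -
    let ?p = "SOME x. x \<in> C"
    have "?p \<in> C"
      using in_components_nonempty[OF C] by (simp add: some_in_eq)
    then have "x \<in> connected_component_set S ?p" "?p \<in> S" "x \<in> S"
      using components_eq_connected_component_set[OF C] \<open>x \<in> C\<close> in_components_subset[OF C]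
      by auto
    then show ?thesis
      unfolding g_def using f by blast
  qed
  have "inj_on g (components S)"
  proof (rule inj_onI)
    fix C C' assume C: "C \<in> components S" and C': "C' \<in> components S" and "g C = g C'"
    obtain x x' where x: "x \<in> C" and x': "x' \<in> C'"
      using in_components_nonempty[OF C] in_components_nonempty[OF C'] by blast
    have "f x = f x'"
      using g[OF C x] g[OF C' x'] \<open>g C = g C'\<close> by simp
    then have "x' \<in> connected_component_set S x"
      using f x x' in_components_subset[OF C] in_components_subset[OF C'] by blast
    then show "C = C'"
      using components_eq_connected_component_set[OF C x]
        components_eq_connected_component_set[OF C' x'] connected_component_eq by blast
  qed
  moreover have "g ` components S = B"
  proof (intro subset_antisym subsetI)
    fix b assume "b \<in> g ` components S"
    then obtain C x where "C \<in> components S" "x \<in> C" "b = g C"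
      using in_components_nonempty by blast
    then show "b \<in> B"
      using g assms(2) in_components_subset by blast
  next
    fix b assume "b \<in> B"
    then obtain x where "x \<in> S" "b = f x"
      using assms(2) by blast
    then have "g (connected_component_set S x) = b"
      using g[OF componentsI[of x S]] by simp
    then show "b \<in> g ` components S"
      using componentsI[OF \<open>x \<in> S\<close>] by blast
  qed
  ultimately show ?thesis
    unfolding bij_betw_def by blast
qed

section \<open>Ranks of coordinates\<close>

definition coord_rank :: "real^('n::finite) \<Rightarrow> 'n \<Rightarrow> nat" where
  "coord_rank x i = card {k. x$k < x$i}"

lemma coord_rank_less_iff: "coord_rank x i < coord_rank x j \<longleftrightarrow> x$i < x$j"
proof
  assume "x$i < x$j"
  then have "{k. x$k < x$i} \<subset> {k. x$k < x$j}" by auto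
  then show "coord_rank x i < coord_rank x j"
    unfolding coord_rank_def by (simp add: psubset_card_mono)
next
  assume "coord_rank x i < coord_rank x j"
  moreover have "x$j \<le> x$i \<Longrightarrow> coord_rank x j \<le> coord_rank x i"
    unfolding coord_rank_def by (intro card_mono) auto
  ultimately show "x$i < x$j" by linarith
qed

lemma coord_rank_less_card: "coord_rank (x::real^('n::finite)) i < CARD('n)"
proof -
  have "{k. x$k < x$i} \<subset> UNIV" by auto
  then show ?thesis
    unfolding coord_rank_def by (simp add: psubset_card_mono)
qed

lemma bij_betw_coord_rank:
  fixes x :: "real^('n::finite)"
  assumes "inj (($) x)"
  shows "bij_betw (coord_rank x) UNIV {..<CARD('n)}"
proof -
  have "inj (coord_rank x)"
  proof (rule injI)
    fix i j assume "coord_rank x i = coord_rank x j"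
    then have "x$i = x$j"
      using coord_rank_less_iff[of x i j] coord_rank_less_iff[of x j i] by auto
    then show "i = j"
      by (rule injD[OF assms])
  qed
  moreover have "range (coord_rank x) \<subseteq> {..<CARD('n)}"
    using coord_rank_less_card by auto
  ultimately show ?thesis
    by (simp add: bij_betw_def card_image card_subset_eq)
qed

lemma card_rank_less:
  assumes "bij_betw r (UNIV::'n::finite set) {..<CARD('n)}" "m \<le> CARD('n)"
  shows "card {i. r i < m} = m"
proof -
  have "r ` {i. r i < m} = {..<m}"
    using assms by (auto simp: bij_betw_def image_iff)
  moreover have "inj_on r {i. r i < m}"
    using assms(1) by (auto simp: bij_betw_def intro: inj_on_subset)
  ultimately show ?thesis
    by (metis card_image card_lessThan)
qed

lemma bij_rank_below_iff:
  fixes r r' :: "'n::finite \<Rightarrow> nat"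
  assumes "bij_betw r UNIV {..<CARD('n)}" "bij_betw r' UNIV {..<CARD('n)}" "k \<le> CARD('n)"
    and "\<And>j. r j < k \<Longrightarrow> r' j = r j"
  shows "r' j < k \<longleftrightarrow> r j < k"
proof -
  have "{j. r j < k} \<subseteq> {j. r' j < k}"
    using assms(4) by auto
  moreover have "card {j. r j < k} = card {j. r' j < k}"
    using card_rank_less[OF assms(1,3)] card_rank_less[OF assms(2,3)] by simp
  ultimately have "{j. r j < k} = {j. r' j < k}"
    by (simp add: card_subset_eq)
  then show ?thesis
    by blast
qed

section \<open>Successors in level sets and queue rankings\<close>

definition has_next :: "('n::linorder \<Rightarrow> 'b) \<Rightarrow> 'n \<Rightarrow> bool" where
  "has_next a t \<longleftrightarrow> (\<exists>j. t < j \<and> a t = a j)"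

definition next_index :: "('n::{finite,linorder} \<Rightarrow> 'b) \<Rightarrow> 'n \<Rightarrow> 'n" where
  "next_index a t = (LEAST j. t < j \<and> a t = a j)"

lemma good_vec_iff_next_index: "good_vec E a \<longleftrightarrow> (\<forall>t. has_next a t \<longrightarrow> {t, next_index a t} \<in> E)"
  unfolding good_vec_def has_next_def next_index_def ..

lemma next_index:
  assumes "has_next a t"
  shows "t < next_index a t" "a (next_index a t) = a t"
    and "\<And>k. t < k \<Longrightarrow> a k = a t \<Longrightarrow> next_index a t \<le> k"
proof -
  let ?P = "\<lambda>j. t < j \<and> a t = a j"
  have "next_index a t = Min {j. ?P j}"
    unfolding next_index_def using assms by (intro Least_Min) (auto simp: has_next_def)
  moreover have "{j. ?P j} \<noteq> {}"
    using assms by (auto simp: has_next_def)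
  ultimately have "?P (next_index a t)" "\<And>k. ?P k \<Longrightarrow> next_index a t \<le> k"
    using Min_in[of "{j. ?P j}"] by auto
  then show "t < next_index a t" "a (next_index a t) = a t"
    and "\<And>k. t < k \<Longrightarrow> a k = a t \<Longrightarrow> next_index a t \<le> k"
    by auto
qed

lemma has_next_next_index_iff:
  "has_next a t \<and> next_index a t = u \<longleftrightarrow> t < u \<and> a u = a t \<and> (\<forall>k. t < k \<and> k < u \<longrightarrow> a k \<noteq> a t)"
proof
  assume "has_next a t \<and> next_index a t = u"
  then show "t < u \<and> a u = a t \<and> (\<forall>k. t < k \<and> k < u \<longrightarrow> a k \<noteq> a t)"
    using next_index[of a t] by force
next
  assume u: "t < u \<and> a u = a t \<and> (\<forall>k. t < k \<and> k < u \<longrightarrow> a k \<noteq> a t)"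
  then have "has_next a t"
    unfolding has_next_def by auto
  moreover have "next_index a t = u"
    using next_index[OF \<open>has_next a t\<close>] u by (metis antisym_conv2)
  ultimately show "has_next a t \<and> next_index a t = u" ..
qed

lemma next_index_inj:
  assumes "has_next a t" "has_next a t'" "next_index a t = next_index a t'"
  shows "t = t'"
  using next_index[OF assms(1)] next_index[OF assms(2)] assms(3)
  by (metis less_le_not_le linorder_neqE)

lemma no_next_unique:
  assumes "\<not> has_next a b" "\<not> has_next a b'" "a b = a b'"
  shows "b = b'"
  using assms unfolding has_next_def by (metis linorder_neqE)

text \<open>A queue ranking of \<open>a\<close> orders the indices as the coordinates of a point with label \<open>a\<close> are
  ordered: the last index \<open>b\<close> of each level set of \<open>a\<close> gets rank \<open>a b\<close>, and the other indices are
  served first-in first-out, in the order in which their successors were ranked.\<close>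

definition queue_ranking :: "('n::{finite,linorder} \<Rightarrow> nat) \<Rightarrow> ('n \<Rightarrow> nat) \<Rightarrow> bool" where
  "queue_ranking a r \<longleftrightarrow> bij_betw r UNIV {..<CARD('n)} \<and>
     (\<forall>b. \<not> has_next a b \<longrightarrow> r b = a b) \<and>
     (\<forall>t. has_next a t \<longrightarrow> r (next_index a t) < r t) \<and>
     (\<forall>t t'. has_next a t \<longrightarrow> has_next a t' \<longrightarrow>
        r (next_index a t) < r (next_index a t') \<longrightarrow> r t < r t')"

lemma queue_rankingD:
  fixes a :: "'n::{finite,linorder} \<Rightarrow> nat"
  assumes "queue_ranking a r"
  shows "bij_betw r UNIV {..<CARD('n)}" and "inj r"
    and "\<not> has_next a b \<Longrightarrow> r b = a b"
    and "has_next a t \<Longrightarrow> r (next_index a t) < r t"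
    and "has_next a t \<Longrightarrow> has_next a t' \<Longrightarrow> r (next_index a t) < r (next_index a t') \<Longrightarrow> r t < r t'"
  using assms unfolding queue_ranking_def bij_betw_def by blast+

text \<open>If two queue rankings agree below rank \<open>k\<close>, they agree on the index of rank \<open>k\<close>: otherwise
  both that index and the one of rank \<open>k\<close> for the other ranking would have successors, and the
  ranking order of these successors would put one of the two below rank \<open>k\<close>.\<close>

lemma queue_ranking_unique_step:
  fixes a r r' :: "'n::{finite,linorder} \<Rightarrow> nat"
  assumes r: "queue_ranking a r" and r': "queue_ranking a r'"
    and below: "\<And>j. r j < k \<Longrightarrow> r' j = r j" and i: "r i = k"
  shows "r' i = k"
proof (rule ccontr)
  assume "r' i \<noteq> k"
  note Q = queue_rankingD[OF r] and Q' = queue_rankingD[OF r']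
  have "k < CARD('n)"
    using i Q(1) unfolding bij_betw_def by auto
  then have same_below: "r' j < k \<longleftrightarrow> r j < k" for j
    using bij_rank_below_iff[OF Q(1) Q'(1)] below by simp
  have "k \<in> range r'"
    using Q'(1) \<open>k < CARD('n)\<close> unfolding bij_betw_def by auto
  then obtain j where j: "r' j = k" by blast
  have "k \<le> r' i" "k \<le> r j"
    using same_below[of i] same_below[of j] i j by auto
  have "i \<noteq> j"
    using \<open>r' i \<noteq> k\<close> j by auto
  have i_next: "has_next a i"
  proof (rule ccontr)
    assume "\<not> has_next a i"
    then show False
      using Q(3) Q'(3) i \<open>r' i \<noteq> k\<close> by simp
  qed
  have j_next: "has_next a j"
  proof (rule ccontr)
    assume "\<not> has_next a j"
    then have "r j = r i"
      using Q(3) Q'(3) i j by simp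
    then show False
      using \<open>i \<noteq> j\<close> injD[OF Q(2)] by blast
  qed
  define u v where "u = next_index a i" and "v = next_index a j"
  have "r' u = r u" "r v = r' v"
    using Q(4)[OF i_next] Q'(4)[OF j_next] below same_below i j unfolding u_def v_def by auto
  moreover have "r u \<noteq> r v"
    using next_index_inj[OF i_next j_next] \<open>i \<noteq> j\<close> injD[OF Q(2)] unfolding u_def v_def by blast
  ultimately consider "r' u < r' v" | "r v < r u"
    by linarith
  then show False
  proof cases
    case 1
    then have "r' i < r' j"
      using Q'(5)[OF i_next j_next] unfolding u_def v_def by blast
    then show False
      using \<open>k \<le> r' i\<close> j by simp
  next
    case 2
    then have "r j < r i"
      using Q(5)[OF j_next i_next] unfolding u_def v_def by blast
    then show False
      using \<open>k \<le> r j\<close> i by simp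
  qed
qed

lemma queue_ranking_unique:
  assumes "queue_ranking a r" "queue_ranking a r'"
  shows "r' = r"
proof -
  have "r j < k \<Longrightarrow> r' j = r j" for j k
  proof (induction k arbitrary: j)
    case (Suc k)
    then show ?case
      using queue_ranking_unique_step[OF assms, of k j] by (cases "r j < k") auto
  qed simp
  then show ?thesis
    by (metis ext lessI)
qed

section \<open>Links and labels\<close>

definition short_pair ::
    "('n::{finite,linorder}) set set \<Rightarrow> real^('n::{finite,linorder}) \<Rightarrow> 'n \<Rightarrow> 'n \<Rightarrow> bool" where
  "short_pair E x i j \<longleftrightarrow> i < j \<and> {i, j} \<in> E \<and> x$j < x$i \<and> x$i < x$j + 1"

definition link ::
    "('n::{finite,linorder}) set set \<Rightarrow> real^('n::{finite,linorder}) \<Rightarrow> 'n \<Rightarrow> 'n \<Rightarrow> bool" where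
  "link E x i j \<longleftrightarrow> short_pair E x i j \<and>
     \<not> (\<exists>k l. short_pair E x k l \<and> (k, l) \<noteq> (i, j) \<and> x$l \<le> x$j \<and> x$i \<le> x$k)"

definition label ::
    "('n::{finite,linorder}) set set \<Rightarrow> real^('n::{finite,linorder}) \<Rightarrow> 'n \<Rightarrow> nat" where
  "label E x i = Min (coord_rank x ` {k. (link E x)\<^sup>*\<^sup>* i k})"

lemma link_short_pair: "link E x i j \<Longrightarrow> short_pair E x i j"
  unfolding link_def by blast

lemma link_less: "link E x i j \<Longrightarrow> i < j \<and> {i, j} \<in> E \<and> x$j < x$i"
  unfolding link_def short_pair_def by blast

lemma link_maximal:
  "link E x i j \<Longrightarrow> short_pair E x k l \<Longrightarrow> x$l \<le> x$j \<Longrightarrow> x$i \<le> x$k \<Longrightarrow> k = i \<and> l = j"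
  unfolding link_def by blast

lemma link_right_unique:
  assumes "link E x i j" "link E x i j'"
  shows "j = j'"
proof (cases "x$j \<le> x$j'")
  case True
  then show ?thesis
    using link_maximal[OF assms(2) link_short_pair[OF assms(1)]] by simp
next
  case False
  then show ?thesis
    using link_maximal[OF assms(1) link_short_pair[OF assms(2)]] by simp
qed

lemma link_left_unique:
  assumes "link E x i j" "link E x i' j"
  shows "i = i'"
proof (cases "x$i \<le> x$i'")
  case True
  then show ?thesis
    using link_maximal[OF assms(1) link_short_pair[OF assms(2)]] by simp
next
  case False
  then show ?thesis
    using link_maximal[OF assms(2) link_short_pair[OF assms(1)]] by simp
qed

lemma link_mono:
  assumes "link E x t u" "link E x t' u'" "x$u < x$u'"
  shows "x$t < x$t'"
proof (rule ccontr)
  assume "\<not> x$t < x$t'"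
  then have "u = u'"
    using link_maximal[OF assms(2) link_short_pair[OF assms(1)]] assms(3) by simp
  then show False
    using assms(3) by simp
qed

lemma short_pair_below_link:
  assumes x: "inj (($) x)" and short: "short_pair E x i j"
  shows "\<exists>k l. link E x k l \<and> x$l \<le> x$j \<and> x$i \<le> x$k"
proof -
  define W where "W = {(k, l). short_pair E x k l \<and> x$l \<le> x$j \<and> x$i \<le> x$k}"
  define width where "width p = x$(fst p) - x$(snd p)" for p
  have "finite (width ` W)" "width ` W \<noteq> {}"
    using short unfolding W_def by auto
  then obtain p where "p \<in> W" "width p = Max (width ` W)"
    using Max_in by (metis imageE)
  then obtain k l where kl: "(k, l) \<in> W" and widest: "\<And>q. q \<in> W \<Longrightarrow> width q \<le> width (k, l)"
    using \<open>finite (width ` W)\<close> by (metis Max_ge image_eqI prod.collapse)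
  have "link E x k l"
    unfolding link_def
  proof (intro conjI notI)
    show "short_pair E x k l"
      using kl unfolding W_def by simp
  next
    assume "\<exists>k' l'. short_pair E x k' l' \<and> (k', l') \<noteq> (k, l) \<and> x$l' \<le> x$l \<and> x$k \<le> x$k'"
    then obtain k' l' where k'l': "short_pair E x k' l'" "(k', l') \<noteq> (k, l)"
      "x$l' \<le> x$l" "x$k \<le> x$k'"
      by blast
    then have "(k', l') \<in> W"
      using kl unfolding W_def by auto
    then have "x$l' = x$l" "x$k' = x$k"
      using widest[of "(k', l')"] k'l'(3,4) unfolding width_def by auto
    then show False
      using k'l'(2) injD[OF x] by blast
  qed
  then show ?thesis
    using kl unfolding W_def by blast
qed

lemma short_pair_iff_below_link:
  assumes "inj (($) x)"
  shows "short_pair E x i j \<longleftrightarrow>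
    i < j \<and> {i, j} \<in> E \<and> x$j < x$i \<and> (\<exists>k l. link E x k l \<and> x$l \<le> x$j \<and> x$i \<le> x$k)"
proof
  assume "short_pair E x i j"
  then show "i < j \<and> {i, j} \<in> E \<and> x$j < x$i \<and> (\<exists>k l. link E x k l \<and> x$l \<le> x$j \<and> x$i \<le> x$k)"
    using short_pair_below_link[OF assms] unfolding short_pair_def by blast
next
  assume "i < j \<and> {i, j} \<in> E \<and> x$j < x$i \<and> (\<exists>k l. link E x k l \<and> x$l \<le> x$j \<and> x$i \<le> x$k)"
  moreover have "x$k < x$l + 1" if "link E x k l" for k l
    using link_short_pair[OF that] unfolding short_pair_def by blast
  ultimately show "short_pair E x i j"
    unfolding short_pair_def by force
qed

lemma link_rtranclp_le: "(link E x)\<^sup>*\<^sup>* i k \<Longrightarrow> x$k \<le> x$i \<and> i \<le> k"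
  by (induction rule: rtranclp_induct) (auto dest: link_less)

lemma link_reach_eq_insert:
  assumes "link E x i j"
  shows "{k. (link E x)\<^sup>*\<^sup>* i k} = insert i {k. (link E x)\<^sup>*\<^sup>* j k}"
proof (intro subset_antisym subsetI)
  fix k assume "k \<in> {k. (link E x)\<^sup>*\<^sup>* i k}"
  then have "(link E x)\<^sup>*\<^sup>* i k" by simp
  then show "k \<in> insert i {k. (link E x)\<^sup>*\<^sup>* j k}"
  proof (cases rule: converse_rtranclpE)
    case (step j')
    then show ?thesis
      using link_right_unique[OF assms] by auto
  qed simp
next
  fix k assume "k \<in> insert i {k. (link E x)\<^sup>*\<^sup>* j k}"
  then show "k \<in> {k. (link E x)\<^sup>*\<^sup>* i k}"
    using assms converse_rtranclp_into_rtranclp[of "link E x" i j] by auto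
qed

lemma label_link:
  assumes "link E x i j"
  shows "label E x i = label E x j"
proof -
  let ?R = "coord_rank x ` {k. (link E x)\<^sup>*\<^sup>* j k}"
  have "Min ?R \<le> coord_rank x j"
    by auto
  also have "coord_rank x j < coord_rank x i"
    using link_less[OF assms] coord_rank_less_iff by blast
  finally have "Min ?R < coord_rank x i" .
  moreover have "finite ?R" "?R \<noteq> {}"
    by auto
  ultimately have "Min (insert (coord_rank x i) ?R) = Min ?R"
    using Min_insert[of ?R "coord_rank x i"] by linarith
  then show ?thesis
    unfolding label_def link_reach_eq_insert[OF assms] by simp
qed

lemma label_no_link:
  assumes "\<And>j. \<not> link E x i j"
  shows "label E x i = coord_rank x i"
proof -
  have "{k. (link E x)\<^sup>*\<^sup>* i k} = {i}"
    using assms by (auto elim: converse_rtranclpE)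
  then show ?thesis
    unfolding label_def by simp
qed

lemma label_le_coord_rank: "label E x i \<le> coord_rank x i"
  unfolding label_def by simp

lemma label_less_card: "label E (x::real^('n::{finite,linorder})) i < CARD('n)"
  using label_le_coord_rank coord_rank_less_card le_less_trans by blast

lemma link_chain_end:
  "\<exists>b. (link E x)\<^sup>*\<^sup>* i b \<and> (\<forall>c. \<not> link E x b c) \<and> label E x i = coord_rank x b"
proof (induction "coord_rank x i" arbitrary: i rule: less_induct)
  case less
  show ?case
  proof (cases "\<exists>j. link E x i j")
    case True
    then obtain j where j: "link E x i j" by blast
    then have "coord_rank x j < coord_rank x i"
      using link_less coord_rank_less_iff by blast
    then obtain b where "(link E x)\<^sup>*\<^sup>* j b" "\<forall>c. \<not> link E x b c" "label E x j = coord_rank x b"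
      using less by blast
    then show ?thesis
      using j label_link[OF j] converse_rtranclp_into_rtranclp[of "link E x" i j] by metis
  next
    case False
    then show ?thesis
      using label_no_link[of E x i] by auto
  qed
qed

lemma link_reach_comparable:
  "(link E x)\<^sup>*\<^sup>* i b \<Longrightarrow> (link E x)\<^sup>*\<^sup>* j b \<Longrightarrow> (link E x)\<^sup>*\<^sup>* i j \<or> (link E x)\<^sup>*\<^sup>* j i"
proof (induction arbitrary: j rule: rtranclp_induct)
  case (step m b)
  from step.prems show ?case
  proof (cases rule: rtranclE[to_pred])
    case base
    then show ?thesis
      using step.hyps rtranclp.rtrancl_into_rtrancl by metis
  next
    case (step m')
    then have "m' = m"
      using link_left_unique \<open>link E x m b\<close> by metis
    then show ?thesis
      using step.IH step(1) by blast
  qed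
qed simp

lemma label_eq_imp_comparable:
  assumes x: "inj (($) x)" and "label E x i = label E x j"
  shows "(link E x)\<^sup>*\<^sup>* i j \<or> (link E x)\<^sup>*\<^sup>* j i"
proof -
  obtain b where b: "(link E x)\<^sup>*\<^sup>* i b" "label E x i = coord_rank x b"
    using link_chain_end by blast
  obtain b' where b': "(link E x)\<^sup>*\<^sup>* j b'" "label E x j = coord_rank x b'"
    using link_chain_end by blast
  have "b = b'"
    using bij_betw_coord_rank[OF x] b b' assms(2) by (metis bij_betw_imp_inj_on injD)
  then show ?thesis
    using link_reach_comparable b b' by metis
qed

lemma link_imp_next_index:
  assumes x: "inj (($) x)" and tu: "link E x t u"
  shows "has_next (label E x) t \<and> next_index (label E x) t = u"
  unfolding has_next_next_index_iff
proof (intro conjI allI impI notI)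
  show "t < u" "label E x u = label E x t"
    using link_less[OF tu] label_link[OF tu] by auto
  fix k assume k: "t < k \<and> k < u" "label E x k = label E x t"
  from label_eq_imp_comparable[OF x k(2)] show False
  proof
    assume "(link E x)\<^sup>*\<^sup>* k t"
    then show False
      using link_rtranclp_le k(1) by fastforce
  next
    assume "(link E x)\<^sup>*\<^sup>* t k"
    then show False
    proof (cases rule: converse_rtranclpE)
      case (step v)
      then have "v = u"
        using link_right_unique tu by metis
      then show False
        using step(2) link_rtranclp_le k(1) by fastforce
    qed (use k in simp)
  qed
qed

lemma next_index_imp_link:
  assumes x: "inj (($) x)" and t: "has_next (label E x) t"
  shows "link E x t (next_index (label E x) t)"
proof -
  define u where "u = next_index (label E x) t"
  have next_u: "t < u" "label E x u = label E x t" "\<And>k. t < k \<Longrightarrow> k < u \<Longrightarrow> label E x k \<noteq> label E x t"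
    using t has_next_next_index_iff[of "label E x" t u] unfolding u_def by auto
  have "(link E x)\<^sup>*\<^sup>* t u \<or> (link E x)\<^sup>*\<^sup>* u t"
    using label_eq_imp_comparable[OF x, where i=t and j=u] next_u by simp
  moreover have "\<not> (link E x)\<^sup>*\<^sup>* u t"
    using link_rtranclp_le next_u leD by blast
  ultimately have "(link E x)\<^sup>*\<^sup>* t u" by blast
  then have "link E x t u"
  proof (cases rule: converse_rtranclpE)
    case (step v)
    have "t < v" "v \<le> u"
      using link_less[OF step(1)] link_rtranclp_le[OF step(2)] by auto
    moreover have "label E x v = label E x t"
      using label_link[OF step(1)] by simp
    ultimately have "v = u"
      using next_u(3) by fastforce
    then show ?thesis
      using step(1) by simp
  qed (use next_u in simp)
  then show ?thesis
    unfolding u_def .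
qed

lemma link_iff_next_index:
  assumes "inj (($) x)"
  shows "link E x t u \<longleftrightarrow> has_next (label E x) t \<and> next_index (label E x) t = u"
  using link_imp_next_index[OF assms] next_index_imp_link[OF assms] by blast

lemma label_good:
  assumes "inj (($) x)"
  shows "good_vec E (label E x)"
proof (unfold good_vec_iff_next_index, intro allI impI)
  fix t assume "has_next (label E x) t"
  then have "link E x t (next_index (label E x) t)"
    using link_iff_next_index[OF assms] by blast
  then show "{t, next_index (label E x) t} \<in> E"
    using link_less by blast
qed

lemma coord_rank_queue_ranking:
  fixes x :: "real^('n::{finite,linorder})"
  assumes x: "inj (($) x)"
  shows "queue_ranking (label E x) (coord_rank x)"
  unfolding queue_ranking_def
proof (intro conjI allI impI)
  show "bij_betw (coord_rank x) UNIV {..<CARD('n)}"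
    using x by (rule bij_betw_coord_rank)
  fix t assume "\<not> has_next (label E x) t"
  then show "coord_rank x t = label E x t"
    using link_iff_next_index[OF x] label_no_link by metis
next
  fix t assume "has_next (label E x) t"
  then show "coord_rank x (next_index (label E x) t) < coord_rank x t"
    using link_iff_next_index[OF x] link_less coord_rank_less_iff by blast
next
  fix t t' assume "has_next (label E x) t" "has_next (label E x) t'"
    and "coord_rank x (next_index (label E x) t) < coord_rank x (next_index (label E x) t')"
  then show "coord_rank x t < coord_rank x t'"
    using link_iff_next_index[OF x] link_mono coord_rank_less_iff by blast
qed

section \<open>The label determines the region\<close>

lemma same_side_label:
  assumes "same_side E x y"
  shows "label E x = label E y"
proof -
  have less: "\<And>i j. x$i < x$j \<longleftrightarrow> y$i < y$j"
    using assms unfolding same_side_def by blast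
  then have le: "\<And>i j. x$i \<le> x$j \<longleftrightarrow> y$i \<le> y$j"
    by (meson not_less)
  have "short_pair E x i j \<longleftrightarrow> short_pair E y i j" for i j
  proof -
    have "x$i < x$j + 1 \<longleftrightarrow> x$i - x$j < 1" "y$i < y$j + 1 \<longleftrightarrow> y$i - y$j < 1"
      by linarith+
    then show ?thesis
      using assms less unfolding same_side_def short_pair_def by blast
  qed
  then have "link E x = link E y"
    unfolding link_def using le by (intro ext) simp
  moreover have "coord_rank x = coord_rank y"
    unfolding coord_rank_def using less by (intro ext) simp
  ultimately show ?thesis
    unfolding label_def by simp
qed

lemma label_eq_imp_link_eq:
  assumes "inj (($) x)" "inj (($) y)" "label E x = label E y"
  shows "link E x = link E y"
  using link_iff_next_index[OF assms(1)] link_iff_next_index[OF assms(2)] assms(3)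
  by (intro ext) simp

lemma label_eq_imp_coord_rank_eq:
  assumes x: "inj (($) x)" and y: "inj (($) y)" and labels: "label E x = label E y"
  shows "coord_rank x = coord_rank y"
  using queue_ranking_unique[OF coord_rank_queue_ranking[OF y, where E=E]]
    coord_rank_queue_ranking[OF x, where E=E, unfolded labels] by blast

lemma label_eq_imp_same_side:
  assumes x: "inj (($) x)" and y: "inj (($) y)" and labels: "label E x = label E y"
  shows "same_side E x y"
proof -
  have less: "x$i < x$j \<longleftrightarrow> y$i < y$j" for i j
    using label_eq_imp_coord_rank_eq[OF assms] coord_rank_less_iff by metis
  then have le: "x$i \<le> x$j \<longleftrightarrow> y$i \<le> y$j" for i j
    by (meson not_less)
  have short: "short_pair E x i j \<longleftrightarrow> short_pair E y i j" for i j
    unfolding short_pair_iff_below_link[OF x] short_pair_iff_below_link[OF y]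
      label_eq_imp_link_eq[OF assms] using less le by blast
  have "x$i - x$j < 1 \<longleftrightarrow> y$i - y$j < 1" if "i < j" "{i, j} \<in> E" for i j
  proof -
    have "z$i - z$j < 1 \<longleftrightarrow> z$i < z$j \<or> short_pair E z i j" if "inj (($) z)" for z
      using that \<open>i < j\<close> \<open>{i, j} \<in> E\<close> injD[OF that, of i j]
      unfolding short_pair_def by force
    then show ?thesis
      using x y less short by blast
  qed
  then show ?thesis
    unfolding same_side_def using less by blast
qed

lemma label_eq_iff_same_side:
  assumes "generic E x" "generic E y"
  shows "label E x = label E y \<longleftrightarrow> same_side E x y"
  using assms label_eq_imp_same_side same_side_label unfolding generic_def by blast

section \<open>Parking functions and cosets\<close>

definition parking_function :: "('n::finite \<Rightarrow> nat) \<Rightarrow> bool" where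
  "parking_function a \<longleftrightarrow> (\<forall>s<CARD('n). s + 1 \<le> card {i. a i \<le> s})"

lemma label_parking_function:
  fixes x :: "real^('n::{finite,linorder})"
  assumes "inj (($) x)"
  shows "parking_function (label E x)"
  unfolding parking_function_def
proof (intro allI impI)
  fix s assume "s < CARD('n)"
  then have "s + 1 = card {i. coord_rank x i < s + 1}"
    using card_rank_less[OF bij_betw_coord_rank[OF assms]] by simp
  also have "\<dots> \<le> card {i. label E x i \<le> s}"
  proof (rule card_mono[OF finite], rule subsetI)
    fix i assume "i \<in> {i. coord_rank x i < s + 1}"
    then show "i \<in> {i. label E x i \<le> s}"
      using label_le_coord_rank[of E x i] by simp
  qed
  finally show "s + 1 \<le> card {i. label E x i \<le> s}" .
qed

lemma card_Collect_not: "card {i::'n::finite. \<not> P i} = CARD('n) - card {i. P i}"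
proof -
  have "{i. \<not> P i} = UNIV - {i. P i}" by auto
  then show ?thesis
    by (simp add: card_Diff_subset)
qed

lemma mod_add_shift_inverse:
  fixes x c m :: nat
  assumes "0 < m"
  shows "((x + c) mod m + (m - c mod m)) mod m = x mod m"
proof -
  have "m * (c div m) + c mod m = c"
    by (rule mult_div_mod_eq)
  moreover have "c mod m < m"
    using assms by simp
  ultimately have "c + (m - c mod m) = m * Suc (c div m)"
    unfolding mult_Suc_right by linarith
  then have "((x + c) mod m + (m - c mod m)) mod m = (x + m * Suc (c div m)) mod m"
    by (simp add: mod_add_left_eq add.assoc)
  also have "\<dots> = x mod m"
    by (rule mod_mult_self2)
  finally show ?thesis .
qed

lemma cosetrel_equiv: "equiv (zvecs :: ('n::finite \<Rightarrow> nat) set) cosetrel"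
proof (rule equivI)
  show "(cosetrel :: (('n \<Rightarrow> nat) \<times> _) set) \<subseteq> zvecs \<times> zvecs"
    unfolding cosetrel_def by auto
  show "refl_on zvecs (cosetrel :: (('n \<Rightarrow> nat) \<times> _) set)"
    unfolding refl_on_def cosetrel_def zvecs_def by (auto intro!: exI[of _ 0])
  show "sym (cosetrel :: (('n \<Rightarrow> nat) \<times> _) set)"
  proof (rule symI)
    fix a b :: "'n \<Rightarrow> nat" assume "(a, b) \<in> cosetrel"
    then obtain c where ab: "a \<in> zvecs" "b \<in> zvecs" "\<And>i. b i = (a i + c) mod (CARD('n) + 1)"
      unfolding cosetrel_def by blast
    have "a i = (b i + (CARD('n) + 1 - c mod (CARD('n) + 1))) mod (CARD('n) + 1)" for i
      using ab(1) mod_add_shift_inverse[of "CARD('n) + 1" "a i" c] unfolding ab(3) zvecs_def by simp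
    then show "(b, a) \<in> cosetrel"
      using ab unfolding cosetrel_def by blast
  qed
  show "trans (cosetrel :: (('n \<Rightarrow> nat) \<times> _) set)"
  proof (rule transI)
    fix a b d :: "'n \<Rightarrow> nat" assume "(a, b) \<in> cosetrel" "(b, d) \<in> cosetrel"
    then obtain c c' where "a \<in> zvecs" "d \<in> zvecs"
      and "\<And>i. b i = (a i + c) mod (CARD('n) + 1)" "\<And>i. d i = (b i + c') mod (CARD('n) + 1)"
      unfolding cosetrel_def by blast
    then show "(a, d) \<in> cosetrel"
      unfolding cosetrel_def by (auto simp: mod_add_left_eq add.assoc)
  qed
qed

lemma cosetrel_eq_iff:
  assumes "(a, b) \<in> (cosetrel :: (('n::finite \<Rightarrow> nat) \<times> _) set)"
  shows "b i = b j \<longleftrightarrow> a i = a j"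
proof -
  obtain c where a: "a \<in> zvecs" and b: "\<And>i. b i = (a i + c) mod (CARD('n) + 1)"
    using assms unfolding cosetrel_def by blast
  have "b i = b j \<longleftrightarrow> a i mod (CARD('n) + 1) = a j mod (CARD('n) + 1)"
    unfolding b using nat_mod_eq_iff by auto
  then show ?thesis
    using a unfolding zvecs_def by simp
qed

lemma good_vec_cosetrel:
  assumes "(a, b) \<in> (cosetrel :: (('n::{finite,linorder} \<Rightarrow> nat) \<times> _) set)" "good_vec E a"
  shows "good_vec E b"
  using assms(2) unfolding good_vec_def cosetrel_eq_iff[OF assms(1)] .

text \<open>Pollak's argument: after a nonzero shift by \<open>c\<close>, the values \<open>< c\<close> of \<open>b\<close> come from the
  values \<open>\<ge> N + 1 - c\<close> of \<open>a\<close>; the parking function \<open>a\<close> has fewer than \<open>c\<close> of those, while the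
  parking function \<open>b\<close> has at least \<open>c\<close> values \<open>< c\<close>.\<close>

lemma parking_function_shift_unique:
  fixes a b :: "'n::finite \<Rightarrow> nat"
  assumes a: "parking_function a" "a \<in> zvecs" and b: "parking_function b"
    and shift: "\<And>i. b i = (a i + c) mod (CARD('n) + 1)"
  shows "b = a"
proof -
  define N where "N = CARD('n)"
  define c' where "c' = c mod (N + 1)"
  have shift': "b i = (a i + c') mod (N + 1)" for i
    using shift unfolding c'_def N_def by (simp add: mod_add_right_eq)
  have a_le: "a i \<le> N" for i
    using a(2) unfolding zvecs_def N_def by (simp add: less_Suc_eq_le)
  show ?thesis
  proof (cases "c' = 0")
    case True
    then show ?thesis
      using shift' a_le by (intro ext) (simp add: le_imp_less_Suc)
  next
    case False
    have "c' \<le> N"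
      unfolding c'_def by (simp add: less_Suc_eq_le)
    have "{i. b i \<le> c' - 1} \<subseteq> {i. \<not> a i \<le> N - c'}"
    proof (intro subsetI CollectI notI)
      fix i assume "i \<in> {i. b i \<le> c' - 1}" "a i \<le> N - c'"
      then show False
        using shift'[of i] \<open>c' \<le> N\<close> False by simp
    qed
    then have "card {i. b i \<le> c' - 1} \<le> N - card {i. a i \<le> N - c'}"
      using card_Collect_not[of "\<lambda>i. a i \<le> N - c'"] card_mono[OF finite] unfolding N_def by metis
    moreover have "N - c' < N" "c' - 1 < N"
      using False \<open>c' \<le> N\<close> by auto
    then have "N - c' + 1 \<le> card {i. a i \<le> N - c'}" "c' - 1 + 1 \<le> card {i. b i \<le> c' - 1}"
      using a(1) b unfolding parking_function_def N_def by blast+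
    ultimately show ?thesis
      using False by linarith
  qed
qed

lemma first_minimizer:
  fixes f :: "nat \<Rightarrow> 'a::linorder"
  obtains s0 where "s0 \<le> N" "\<And>s. s \<le> N \<Longrightarrow> f s0 \<le> f s" "\<And>s. s < s0 \<Longrightarrow> f s0 < f s"
proof -
  define M where "M = Min (f ` {..N})"
  define s0 where "s0 = (LEAST s. s \<le> N \<and> f s = M)"
  have "M \<in> f ` {..N}"
    unfolding M_def by (rule Min_in) auto
  then have "\<exists>s. s \<le> N \<and> f s = M"
    by auto
  then have s0: "s0 \<le> N" "f s0 = M"
    unfolding s0_def by (metis (mono_tags, lifting) LeastI)+
  moreover have "f s0 \<le> f s" if "s \<le> N" for s
    using that s0(2) unfolding M_def by simp
  moreover have "f s0 < f s" if "s < s0" for s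
    using that not_less_Least[of s "\<lambda>s. s \<le> N \<and> f s = M"] s0 calculation(3)[of s]
    unfolding s0_def by fastforce
  ultimately show ?thesis
    using that by blast
qed

lemma rotate_mod_eq:
  fixes v s0 N :: nat
  assumes "v \<le> N" "s0 \<le> N"
  shows "(v + (N - s0)) mod (N + 1) = (if v \<le> s0 then v + N - s0 else v - s0 - 1)"
proof (cases "v \<le> s0")
  case False
  then have "v + (N - s0) = (v - s0 - 1) + (N + 1)"
    using assms by simp
  then have "(v + (N - s0)) mod (N + 1) = (v - s0 - 1) mod (N + 1)"
    by (simp only: mod_add_self2)
  then show ?thesis
    using assms False by simp
qed (use assms in simp)

lemma card_rotate_le:
  fixes a :: "'n::finite \<Rightarrow> nat" and s0 s :: nat
  defines "N \<equiv> CARD('n)"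
  defines "b \<equiv> \<lambda>i. (a i + (N - s0)) mod (N + 1)"
  assumes a: "\<And>i. a i \<le> N" and "s0 \<le> N" "s < N"
  shows "s + s0 + 1 \<le> N \<Longrightarrow>
      card {i. a i \<le> s + s0 + 1} - card {i. a i \<le> s0} \<le> card {i. b i \<le> s}"
    and "N < s + s0 + 1 \<Longrightarrow>
      (N - card {i. a i \<le> s0}) + card {i. a i \<le> s + s0 - N} \<le> card {i. b i \<le> s}"
proof -
  have b: "b i = (if a i \<le> s0 then a i + N - s0 else a i - s0 - 1)" for i
    unfolding b_def using rotate_mod_eq[OF a \<open>s0 \<le> N\<close>] .
  assume "s + s0 + 1 \<le> N"
  then have "{i. a i \<le> s + s0 + 1} - {i. a i \<le> s0} \<subseteq> {i. b i \<le> s}"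
    using b by auto
  then have "card ({i. a i \<le> s + s0 + 1} - {i. a i \<le> s0}) \<le> card {i. b i \<le> s}"
    by (simp add: card_mono)
  then show "card {i. a i \<le> s + s0 + 1} - card {i. a i \<le> s0} \<le> card {i. b i \<le> s}"
    by (subst (asm) card_Diff_subset) auto
next
  have b: "b i = (if a i \<le> s0 then a i + N - s0 else a i - s0 - 1)" for i
    unfolding b_def using rotate_mod_eq[OF a \<open>s0 \<le> N\<close>] .
  assume "N < s + s0 + 1"
  then have "b i \<le> s" if "\<not> a i \<le> s0 \<or> a i \<le> s + s0 - N" for i
    using b[of i] a[of i] that by auto
  then have "{i. \<not> a i \<le> s0} \<union> {i. a i \<le> s + s0 - N} \<subseteq> {i. b i \<le> s}"
    by blast
  then have "card ({i. \<not> a i \<le> s0} \<union> {i. a i \<le> s + s0 - N}) \<le> card {i. b i \<le> s}"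
    by (simp add: card_mono)
  moreover have "card ({i. \<not> a i \<le> s0} \<union> {i. a i \<le> s + s0 - N}) =
      (N - card {i. a i \<le> s0}) + card {i. a i \<le> s + s0 - N}"
    using \<open>s < N\<close> card_Collect_not[of "\<lambda>i. a i \<le> s0"] unfolding N_def
    by (subst card_Un_disjoint) auto
  ultimately show "(N - card {i. a i \<le> s0}) + card {i. a i \<le> s + s0 - N} \<le> card {i. b i \<le> s}"
    by simp
qed

text \<open>Pollak's rotation: shifting by \<open>N - s\<^sub>0\<close>, where \<open>s\<^sub>0\<close> first minimises the excess
  \<open>#{i. a i \<le> s} - s\<close>, turns \<open>a\<close> into a parking function.\<close>

lemma parking_function_shift_at_first_minimizer:
  fixes a :: "'n::finite \<Rightarrow> nat"
  defines "N \<equiv> CARD('n)"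
  defines "excess s \<equiv> int (card {i. a i \<le> s}) - int s"
  assumes a: "a \<in> zvecs" and s0: "s0 \<le> N"
    and min: "\<And>s. s \<le> N \<Longrightarrow> excess s0 \<le> excess s" and first: "\<And>s. s < s0 \<Longrightarrow> excess s0 < excess s"
  shows "parking_function (\<lambda>i. (a i + (N - s0)) mod (N + 1))"
  unfolding parking_function_def N_def[symmetric]
proof (intro allI impI)
  fix s assume "s < N"
  have a_le: "a i \<le> N" for i
    using a unfolding zvecs_def N_def by (simp add: less_Suc_eq_le)
  have card_le: "card {i. a i \<le> t} \<le> N" for t
    unfolding N_def by (rule card_mono) auto
  note bounds = card_rotate_le[of a, folded N_def, OF a_le s0 \<open>s < N\<close>]
  show "s + 1 \<le> card {i. (a i + (N - s0)) mod (N + 1) \<le> s}"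
  proof (cases "s + s0 + 1 \<le> N")
    case True
    then have "excess s0 \<le> excess (s + s0 + 1)"
      using min by simp
    then show ?thesis
      using bounds(1)[OF True] card_le unfolding excess_def by linarith
  next
    case False
    then have "excess s0 < excess (s + s0 - N)"
      using first \<open>s < N\<close> by simp
    then show ?thesis
      using bounds(2) False card_le[of s0] unfolding excess_def by linarith
  qed
qed

lemma parking_function_shift_exists:
  fixes a :: "'n::finite \<Rightarrow> nat"
  assumes "a \<in> zvecs"
  shows "\<exists>c. parking_function (\<lambda>i. (a i + c) mod (CARD('n) + 1))"
proof -
  obtain s0 where "s0 \<le> CARD('n)"
    and "\<And>s. s \<le> CARD('n) \<Longrightarrow> int (card {i. a i \<le> s0}) - s0 \<le> int (card {i. a i \<le> s}) - s"
    and "\<And>s. s < s0 \<Longrightarrow> int (card {i. a i \<le> s0}) - s0 < int (card {i. a i \<le> s}) - s"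
    by (rule first_minimizer[where N="CARD('n)" and f="\<lambda>s. int (card {i. a i \<le> s}) - int s"]) blast
  then show ?thesis
    using parking_function_shift_at_first_minimizer[OF assms] by blast
qed

section \<open>Realising a good parking function\<close>

definition realises :: "(nat \<Rightarrow> nat) \<Rightarrow> nat \<Rightarrow> (nat \<Rightarrow> real) \<Rightarrow> bool" where
  "realises R N y \<longleftrightarrow> (\<forall>p q. p < q \<longrightarrow> q < N \<longrightarrow>
     y p < y q \<and> (q \<le> R p \<longrightarrow> y q - y p < 1) \<and> (R p < q \<longrightarrow> 1 < y q - y p))"

lemma finite_separation:
  fixes L U :: "real set"
  assumes "finite L" "finite U" "\<And>l u. l \<in> L \<Longrightarrow> u \<in> U \<Longrightarrow> l < u"
  shows "\<exists>v. (\<forall>l\<in>L. l < v) \<and> (\<forall>u\<in>U. v < u)"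
proof -
  define lo where "lo = (if L = {} then if U = {} then 0 else Min U - 1 else Max L)"
  define hi where "hi = (if U = {} then lo + 1 else Min U)"
  have "\<forall>l\<in>L. l \<le> lo" "\<forall>u\<in>U. hi \<le> u"
    unfolding lo_def hi_def using assms(1,2) by auto
  moreover have "lo < hi"
  proof (cases "L = {} \<or> U = {}")
    case True
    then show ?thesis
      unfolding lo_def hi_def by auto
  next
    case False
    then show ?thesis
      unfolding lo_def hi_def using assms Max_in[OF assms(1)] Min_in[OF assms(2)] by auto
  qed
  ultimately have "\<forall>l\<in>L. l < (lo + hi) / 2" "\<forall>u\<in>U. (lo + hi) / 2 < u"
    by (auto simp: field_simps)
  then show ?thesis
    by blast
qed

lemma realises_fun_upd:
  assumes y: "realises R N y"
    and v: "\<And>p. p < N \<Longrightarrow> y p < v \<and> (N \<le> R p \<longrightarrow> v - y p < 1) \<and> (R p < N \<longrightarrow> 1 < v - y p)"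
  shows "realises R (Suc N) (y(N := v))"
  unfolding realises_def
proof (intro allI impI)
  fix p q assume "p < q" "q < Suc N"
  then consider "q < N" | "q = N"
    by linarith
  then show "(y(N := v)) p < (y(N := v)) q \<and> (q \<le> R p \<longrightarrow> (y(N := v)) q - (y(N := v)) p < 1) \<and>
      (R p < q \<longrightarrow> 1 < (y(N := v)) q - (y(N := v)) p)"
  proof cases
    case 1
    then show ?thesis
      using y \<open>p < q\<close> unfolding realises_def by auto
  next
    case 2
    then show ?thesis
      using v[of p] \<open>p < q\<close> by auto
  qed
qed

text \<open>The new point \<open>N\<close> must lie above all \<open>y p\<close>, within distance \<open>1\<close> of \<open>y p\<close> exactly for
  \<open>p \<ge> p\<^sub>0\<close>, the first \<open>p\<close> with \<open>N \<le> R p\<close>; these bounds are compatible because \<open>R\<close> is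
  monotone and \<open>y\<close> already realises \<open>R\<close> below \<open>N\<close>.\<close>

lemma realises_Suc:
  fixes R :: "nat \<Rightarrow> nat"
  assumes R: "\<And>p. p \<le> R p" "mono R" and y: "realises R N y"
  shows "\<exists>z. realises R (Suc N) z"
proof -
  have y_less: "p < q \<Longrightarrow> q < N \<Longrightarrow> y p < y q"
    and y_near: "p < q \<Longrightarrow> q < N \<Longrightarrow> q \<le> R p \<Longrightarrow> y q - y p < 1" for p q
    using y unfolding realises_def by blast+
  define p0 where "p0 = (LEAST p. N \<le> R p)"
  have "N \<le> R p0"
    unfolding p0_def using R(1)[of N] by (rule LeastI)
  then have near_iff: "N \<le> R p \<longleftrightarrow> p0 \<le> p" for p
    using R(2) unfolding p0_def by (meson Least_le monoD order_trans)
  let ?L = "y ` {..<N} \<union> (\<lambda>p. y p + 1) ` {..<p0}" and ?U = "(\<lambda>p. y p + 1) ` {p0..<N}"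
  have "l < u" if "l \<in> ?L" "u \<in> ?U" for l u
  proof -
    obtain p' where p': "p0 \<le> p'" "p' < N" "u = y p' + 1"
      using \<open>u \<in> ?U\<close> by auto
    have "y p < y p' + 1" if "p < N" for p
    proof (cases "p' < p")
      case True
      then show ?thesis
        using y_near[of p' p] near_iff[of p'] p' that by simp
    next
      case False
      then have "y p \<le> y p'"
        using y_less[of p p'] p'(2) by (cases "p = p'") auto
      then show ?thesis
        by simp
    qed
    moreover have "y p < y p'" if "p < p0" for p
      using y_less p' that by simp
    ultimately show ?thesis
      using \<open>l \<in> ?L\<close> p'(3) by auto
  qed
  then obtain v where below: "\<forall>l\<in>?L. l < v" and above: "\<forall>u\<in>?U. v < u"
    using finite_separation[of ?L ?U] by blast
  have "y p < v \<and> (N \<le> R p \<longrightarrow> v - y p < 1) \<and> (R p < N \<longrightarrow> 1 < v - y p)" if "p < N" for p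
  proof (intro conjI impI)
    show "y p < v"
      using below that by blast
    show "v - y p < 1" if "N \<le> R p"
      using above near_iff[of p] that \<open>p < N\<close> by force
    show "1 < v - y p" if "R p < N"
    proof -
      have "p < p0"
        using near_iff[of p] that by simp
      then have "y p + 1 < v"
        using below by blast
      then show ?thesis
        by simp
    qed
  qed
  then show ?thesis
    using realises_fun_upd[OF y] by blast
qed

lemma realises_exists:
  fixes R :: "nat \<Rightarrow> nat"
  assumes "\<And>p. p \<le> R p" "mono R"
  shows "\<exists>y. realises R N y"
proof (induction N)
  case 0
  show ?case
    unfolding realises_def by simp
next
  case (Suc N)
  then show ?case
    using realises_Suc[OF assms] by blast
qed

definition partial_queue_ranking ::
    "('n::{finite,linorder} \<Rightarrow> nat) \<Rightarrow> nat \<Rightarrow> 'n set \<Rightarrow> ('n \<Rightarrow> nat) \<Rightarrow> bool" where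
  "partial_queue_ranking a s D r \<longleftrightarrow> bij_betw r D {..<s} \<and>
     (\<forall>b. \<not> has_next a b \<longrightarrow> (b \<in> D \<longleftrightarrow> a b < s) \<and> (b \<in> D \<longrightarrow> r b = a b)) \<and>
     (\<forall>t\<in>D. has_next a t \<longrightarrow> next_index a t \<in> D \<and> r (next_index a t) < r t) \<and>
     (\<forall>t t'. has_next a t \<longrightarrow> has_next a t' \<longrightarrow> t' \<in> D \<longrightarrow> next_index a t \<in> D \<longrightarrow>
        r (next_index a t) < r (next_index a t') \<longrightarrow> t \<in> D \<and> r t < r t')"

lemma bij_betw_fun_upd_insert:
  assumes "bij_betw r D {..<s}" "w \<notin> D"
  shows "bij_betw (r(w := s)) (insert w D) {..<Suc s}"
proof -
  have "bij_betw (r(w := s)) D {..<s}"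
    using assms by (subst bij_betw_cong[of D _ r]) auto
  then have "bij_betw (r(w := s)) (D \<union> {w}) ({..<s} \<union> {(r(w := s)) w})"
    using assms(2) by (intro notIn_Un_bij_betw) auto
  then show ?thesis
    by (simp add: lessThan_Suc)
qed

lemma partial_queue_rankingI:
  assumes "bij_betw r D {..<s}"
    and "\<And>b. \<not> has_next a b \<Longrightarrow> b \<in> D \<longleftrightarrow> a b < s"
    and "\<And>b. \<not> has_next a b \<Longrightarrow> b \<in> D \<Longrightarrow> r b = a b"
    and "\<And>t. t \<in> D \<Longrightarrow> has_next a t \<Longrightarrow> next_index a t \<in> D \<and> r (next_index a t) < r t"
    and "\<And>t t'. has_next a t \<Longrightarrow> has_next a t' \<Longrightarrow> t' \<in> D \<Longrightarrow> next_index a t \<in> D \<Longrightarrow>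
      r (next_index a t) < r (next_index a t') \<Longrightarrow> t \<in> D \<and> r t < r t'"
  shows "partial_queue_ranking a s D r"
  using assms unfolding partial_queue_ranking_def by blast

lemma partial_queue_rankingD:
  assumes "partial_queue_ranking a s D r"
  shows "bij_betw r D {..<s}"
    and "\<not> has_next a b \<Longrightarrow> b \<in> D \<longleftrightarrow> a b < s"
    and "\<not> has_next a b \<Longrightarrow> b \<in> D \<Longrightarrow> r b = a b"
    and "t \<in> D \<Longrightarrow> has_next a t \<Longrightarrow> next_index a t \<in> D"
    and "t \<in> D \<Longrightarrow> has_next a t \<Longrightarrow> r (next_index a t) < r t"
    and "has_next a t \<Longrightarrow> has_next a t' \<Longrightarrow> t' \<in> D \<Longrightarrow> next_index a t \<in> D \<Longrightarrow>
      r (next_index a t) < r (next_index a t') \<Longrightarrow> t \<in> D \<and> r t < r t'"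
    and "t \<in> D \<Longrightarrow> r t < s"
  using assms unfolding partial_queue_ranking_def bij_betw_def by blast+

text \<open>The step of the greedy construction: rank \<open>s\<close> goes to the last index \<open>w\<close> of the level
  set of value \<open>s\<close> if there is one, and otherwise to the unranked index whose successor was
  ranked first.\<close>

lemma partial_queue_ranking_insert:
  assumes r: "partial_queue_ranking a s D r" and w: "w \<notin> D"
    and last: "\<And>b. \<not> has_next a b \<Longrightarrow> a b = s \<longleftrightarrow> b = w"
    and ready: "has_next a w \<Longrightarrow> next_index a w \<in> D"
    and first: "\<And>t. has_next a w \<Longrightarrow> t \<notin> D \<Longrightarrow> has_next a t \<Longrightarrow> next_index a t \<in> D \<Longrightarrow>
      r (next_index a w) \<le> r (next_index a t)"
  shows "partial_queue_ranking a (Suc s) (insert w D) (r(w := s))"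
proof (rule partial_queue_rankingI)
  note R = partial_queue_rankingD[OF r]
  show "bij_betw (r(w := s)) (insert w D) {..<Suc s}"
    by (rule bij_betw_fun_upd_insert[OF R(1) w])
  fix b assume b: "\<not> has_next a b"
  show "b \<in> insert w D \<longleftrightarrow> a b < Suc s"
    using R(2)[OF b] last[OF b] by auto
  show "b \<in> insert w D \<Longrightarrow> (r(w := s)) b = a b"
    using R(3)[OF b] last[OF b] by auto
next
  note R = partial_queue_rankingD[OF r]
  fix t assume t: "t \<in> insert w D" "has_next a t"
  show "next_index a t \<in> insert w D \<and> (r(w := s)) (next_index a t) < (r(w := s)) t"
  proof (cases "t = w")
    case True
    then show ?thesis
      using ready R(7) w t(2) by auto
  next
    case False
    then have "t \<in> D"
      using t(1) by simp
    then show ?thesis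
      using R(4,5)[OF \<open>t \<in> D\<close> t(2)] w False by auto
  qed
next
  note R = partial_queue_rankingD[OF r]
  fix t t' assume t: "has_next a t" "has_next a t'" "t' \<in> insert w D" "next_index a t \<in> insert w D"
    and less: "(r(w := s)) (next_index a t) < (r(w := s)) (next_index a t')"
  have "next_index a t' \<in> D"
    using t(2,3) ready R(4) by auto
  then have "(r(w := s)) (next_index a t') < s"
    using R(7) w by auto
  then have "next_index a t \<noteq> w"
    using less by auto
  then have next_t: "next_index a t \<in> D" "r (next_index a t) < r (next_index a t')"
    using t(4) less \<open>next_index a t' \<in> D\<close> w by (auto split: if_splits)
  show "t \<in> insert w D \<and> (r(w := s)) t < (r(w := s)) t'"
  proof (cases "t' = w")
    case True
    have "t \<in> D"
      using first[of t] next_t t(1,2) True by force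
    then show ?thesis
      using True R(7) w by auto
  next
    case False
    then have "t \<in> D \<and> r t < r t'"
      using R(6)[OF t(1,2) _ next_t] t(3) by simp
    then show ?thesis
      using False w by auto
  qed
qed

lemma ready_index_exists:
  assumes a: "parking_function a" and "s < CARD('n)" and r: "partial_queue_ranking a s D r"
    and no_last: "\<And>b. \<not> has_next a b \<Longrightarrow> a b \<noteq> s"
  shows "\<exists>t::'n::{finite,linorder}. t \<notin> D \<and> has_next a t \<and> next_index a t \<in> D"
proof -
  have "card D = s"
    using bij_betw_same_card[OF partial_queue_rankingD(1)[OF r]] by simp
  moreover have "s + 1 \<le> card {i. a i \<le> s}"
    using a \<open>s < CARD('n)\<close> unfolding parking_function_def by blast
  ultimately have "\<not> {i. a i \<le> s} \<subseteq> D"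
    using card_mono[of D "{i. a i \<le> s}"] by auto
  then obtain i where i: "a i \<le> s" "i \<notin> D"
    by blast
  define t where "t = Max {k. a k = a i \<and> k \<notin> D}"
  have t: "a t = a i" "t \<notin> D" and t_max: "\<And>k. a k = a i \<Longrightarrow> k \<notin> D \<Longrightarrow> k \<le> t"
    using Max_in[of "{k. a k = a i \<and> k \<notin> D}"] Max_ge[of "{k. a k = a i \<and> k \<notin> D}"] i
    unfolding t_def by auto
  have "has_next a t"
  proof (rule ccontr)
    assume "\<not> has_next a t"
    then have "t \<in> D"
      using partial_queue_rankingD(2)[OF r] no_last[of t] t i by auto
    then show False
      using t by simp
  qed
  moreover have "next_index a t \<in> D"
    using next_index[OF \<open>has_next a t\<close>] t t_max[of "next_index a t"] by fastforce
  ultimately show ?thesis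
    using t by blast
qed

lemma partial_queue_ranking_exists:
  assumes a: "parking_function a"
  shows "s \<le> CARD('n) \<Longrightarrow> \<exists>D r. partial_queue_ranking (a :: 'n::{finite,linorder} \<Rightarrow> nat) s D r"
proof (induction s)
  case 0
  have "partial_queue_ranking a 0 {} (\<lambda>_. 0)"
    unfolding partial_queue_ranking_def by (simp add: bij_betw_def)
  then show ?case by blast
next
  case (Suc s)
  then obtain D r where r: "partial_queue_ranking a s D r"
    by auto
  show ?case
  proof (cases "\<exists>b. \<not> has_next a b \<and> a b = s")
    case True
    then obtain w where w: "\<not> has_next a w" "a w = s"
      by blast
    moreover have "w \<notin> D"
      using partial_queue_rankingD(2)[OF r] w by simp
    moreover have "a b = s \<longleftrightarrow> b = w" if "\<not> has_next a b" for b
      using no_next_unique[OF that w(1)] w by auto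
    ultimately show ?thesis
      using partial_queue_ranking_insert[OF r, of w] by blast
  next
    case False
    then have no_last: "\<And>b. \<not> has_next a b \<Longrightarrow> a b \<noteq> s"
      by blast
    let ?ready = "\<lambda>t. t \<notin> D \<and> has_next a t \<and> next_index a t \<in> D"
    obtain t where "?ready t"
      using ready_index_exists[OF a _ r no_last] Suc.prems by auto
    then obtain w where "?ready w" "\<forall>t. ?ready t \<longrightarrow> r (next_index a w) \<le> r (next_index a t)"
      using ex_has_least_nat[of ?ready t "\<lambda>t. r (next_index a t)"] by blast
    moreover have "a b = s \<longleftrightarrow> b = w" if "\<not> has_next a b" for b
      using no_last[OF that] that \<open>?ready w\<close> by blast
    ultimately show ?thesis
      using partial_queue_ranking_insert[OF r, of w] by blast
  qed
qed

lemma queue_ranking_exists: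
  assumes "parking_function (a :: 'n::{finite,linorder} \<Rightarrow> nat)"
  shows "\<exists>r. queue_ranking a r"
proof -
  obtain D r where r: "partial_queue_ranking a CARD('n) D r"
    using partial_queue_ranking_exists[OF assms] by blast
  then have "card D = CARD('n)"
    unfolding partial_queue_ranking_def by (metis bij_betw_same_card card_lessThan)
  then have "D = UNIV"
    by (simp add: card_eq_UNIV_imp_eq_UNIV)
  then have "queue_ranking a r"
    using r unfolding partial_queue_ranking_def queue_ranking_def by auto
  then show ?thesis by blast
qed

text \<open>Rank \<open>q\<close> is to lie within distance \<open>1\<close> above rank \<open>p\<close> exactly when \<open>q\<close> is at most the
  rank of the upper end of some link whose lower end has rank at most \<open>p\<close>.\<close>

definition queue_reach :: "('n::{finite,linorder} \<Rightarrow> nat) \<Rightarrow> ('n \<Rightarrow> nat) \<Rightarrow> nat \<Rightarrow> nat" where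
  "queue_reach a r p = Max (insert p {r t | t. has_next a t \<and> r (next_index a t) \<le> p})"

lemma finite_queue_reach_set: "finite (insert p {r t | t. has_next a t \<and> r (next_index a t) \<le> p})"
proof -
  have "{r t | t. has_next a t \<and> r (next_index a t) \<le> p} \<subseteq> range r"
    by auto
  then show ?thesis
    by (simp add: finite_subset)
qed

lemma queue_reach_ge: "p \<le> queue_reach a r p"
  unfolding queue_reach_def using finite_queue_reach_set by simp

lemma mono_queue_reach: "mono (queue_reach a r)"
proof (rule monoI)
  fix p q :: nat assume "p \<le> q"
  then have "insert p {r t | t. has_next a t \<and> r (next_index a t) \<le> p} \<subseteq>
      insert p {r t | t. has_next a t \<and> r (next_index a t) \<le> q}"
    by auto
  then have "queue_reach a r p \<le> Max (insert p {r t | t. has_next a t \<and> r (next_index a t) \<le> q})"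
    unfolding queue_reach_def using finite_queue_reach_set by (intro Max_mono) auto
  also have "\<dots> \<le> queue_reach a r q"
    unfolding queue_reach_def using finite_queue_reach_set \<open>p \<le> q\<close>
    by (auto intro: Max_ge order_trans[OF _ queue_reach_ge[unfolded queue_reach_def]])
  finally show "queue_reach a r p \<le> queue_reach a r q" .
qed

lemma queue_reach_next: "has_next a t \<Longrightarrow> r t \<le> queue_reach a r (r (next_index a t))"
  unfolding queue_reach_def using finite_queue_reach_set by (intro Max_ge) auto

lemma queue_reach_witness:
  assumes "p < k" "k \<le> queue_reach a r p"
  shows "\<exists>t. has_next a t \<and> r (next_index a t) \<le> p \<and> k \<le> r t"
proof -
  have "queue_reach a r p \<in> insert p {r t | t. has_next a t \<and> r (next_index a t) \<le> p}"
    unfolding queue_reach_def using finite_queue_reach_set by (rule Max_in) simp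
  then show ?thesis
    using assms by auto
qed

context
  fixes E :: "('n::{finite,linorder}) set set" and a :: "'n \<Rightarrow> nat" and r :: "'n \<Rightarrow> nat"
    and y :: "nat \<Rightarrow> real" and x :: "real^('n::{finite,linorder})"
  assumes queue: "queue_ranking a r" and good: "good_vec E a"
    and y: "realises (queue_reach a r) CARD('n) y" and x: "\<And>i. x$i = y (r i)"
begin

lemma queue_point_less_iff: "x$i < x$j \<longleftrightarrow> r i < r j"
proof -
  have "r i < CARD('n)" "r j < CARD('n)" "r i = r j \<longleftrightarrow> i = j"
    using queue_rankingD(1,2)[OF queue] unfolding bij_betw_def inj_def by auto
  then show ?thesis
    using y[unfolded realises_def, rule_format, of "r i" "r j"]
      y[unfolded realises_def, rule_format, of "r j" "r i"] x
    by (metis linorder_neqE_nat order_less_asym order_less_irrefl)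
qed

lemma queue_point_inj: "inj (($) x)"
proof (rule injI)
  fix i j assume "x$i = x$j"
  then have "r i = r j"
    using queue_point_less_iff[of i j] queue_point_less_iff[of j i] by auto
  then show "i = j"
    using injD[OF queue_rankingD(2)[OF queue]] by blast
qed

lemma coord_rank_queue_point: "coord_rank x = r"
proof
  fix i
  have "{k. x$k < x$i} = {k. r k < r i}"
    using queue_point_less_iff by blast
  moreover have "r i \<le> CARD('n)"
    using queue_rankingD(1)[OF queue] unfolding bij_betw_def by (auto intro: less_imp_le)
  ultimately show "coord_rank x i = r i"
    using card_rank_less[OF queue_rankingD(1)[OF queue]] unfolding coord_rank_def by simp
qed

lemma queue_point_diff:
  assumes "r j < r i"
  shows "x$i - x$j < 1 \<longleftrightarrow> r i \<le> queue_reach a r (r j)" and "x$i - x$j \<noteq> 1"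
proof -
  have "r i < CARD('n)"
    using queue_rankingD(1)[OF queue] unfolding bij_betw_def by auto
  then show "x$i - x$j < 1 \<longleftrightarrow> r i \<le> queue_reach a r (r j)" "x$i - x$j \<noteq> 1"
    using y[unfolded realises_def, rule_format, OF assms] x by (auto simp: not_le)
qed

lemma queue_point_generic: "generic E x"
  unfolding generic_def
proof (intro conjI allI impI queue_point_inj)
  fix i j assume "i < j \<and> {i, j} \<in> E"
  show "x$i - x$j \<noteq> 1"
  proof (cases "r j < r i")
    case True
    then show ?thesis
      using queue_point_diff by blast
  next
    case False
    then show ?thesis
      using queue_point_less_iff[of j i] by simp
  qed
qed

lemma queue_point_short_pair_iff:
  "short_pair E x i j \<longleftrightarrow> i < j \<and> {i, j} \<in> E \<and> r j < r i \<and> r i \<le> queue_reach a r (r j)"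
proof (cases "r j < r i")
  case True
  have "x$i < x$j + 1 \<longleftrightarrow> x$i - x$j < 1" by linarith
  then show ?thesis
    unfolding short_pair_def using queue_point_less_iff queue_point_diff(1)[OF True] True by blast
next
  case False
  then show ?thesis
    unfolding short_pair_def using queue_point_less_iff by blast
qed

lemma queue_point_short_pair_within:
  assumes kl: "short_pair E x k l" and t: "has_next a t"
    and ranks: "r l \<le> r (next_index a t)" "r t \<le> r k"
  shows "k = t \<and> l = next_index a t"
proof -
  note Q = queue_rankingD[OF queue]
  have "r l < r k" "r k \<le> queue_reach a r (r l)"
    using kl unfolding queue_point_short_pair_iff by auto
  then obtain t' where t': "has_next a t'" "r (next_index a t') \<le> r l" "r k \<le> r t'"
    using queue_reach_witness by blast
  have "\<not> r (next_index a t') < r (next_index a t)"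
    using Q(5)[OF t'(1) t] t'(3) ranks(2) by linarith
  then have "r l = r (next_index a t)" "r (next_index a t') = r (next_index a t)"
    using t'(2) ranks(1) by auto
  then have "l = next_index a t" "t' = t"
    using injD[OF Q(2)] next_index_inj[OF t'(1) t] by auto
  moreover have "k = t"
    using t'(3) ranks(2) injD[OF Q(2)] \<open>t' = t\<close> by (metis antisym)
  ultimately show ?thesis
    by simp
qed

lemma queue_point_link_next:
  assumes t: "has_next a t"
  shows "link E x t (next_index a t)"
  unfolding link_def
proof (intro conjI notI)
  have "{t, next_index a t} \<in> E"
    using good t unfolding good_vec_iff_next_index by blast
  then show "short_pair E x t (next_index a t)"
    unfolding queue_point_short_pair_iff
    using next_index(1)[OF t] queue_rankingD(4)[OF queue t] queue_reach_next[OF t] by blast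
  assume "\<exists>k l. short_pair E x k l \<and> (k, l) \<noteq> (t, next_index a t) \<and>
    x$l \<le> x$(next_index a t) \<and> x$t \<le> x$k"
  then obtain k l where kl: "short_pair E x k l" "(k, l) \<noteq> (t, next_index a t)"
    and "x$l \<le> x$(next_index a t)" "x$t \<le> x$k"
    by blast
  then have "\<not> r (next_index a t) < r l" "\<not> r k < r t"
    unfolding queue_point_less_iff[symmetric] by auto
  then have "r l \<le> r (next_index a t)" "r t \<le> r k"
    by auto
  then show False
    using queue_point_short_pair_within[OF kl(1) t] kl(2) by simp
qed

lemma queue_point_link_iff: "link E x t u \<longleftrightarrow> has_next a t \<and> u = next_index a t"
proof
  assume tu: "link E x t u"
  have "r u < r t" "r t \<le> queue_reach a r (r u)"
    using link_short_pair[OF tu] unfolding queue_point_short_pair_iff by auto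
  then obtain t' where t': "has_next a t'" "r (next_index a t') \<le> r u" "r t \<le> r t'"
    using queue_reach_witness by blast
  then have "x$(next_index a t') \<le> x$u" "x$t \<le> x$t'"
    using queue_point_less_iff by (meson not_le)+
  then have "t' = t \<and> next_index a t' = u"
    using link_maximal[OF tu link_short_pair[OF queue_point_link_next[OF t'(1)]]] by blast
  then show "has_next a t \<and> u = next_index a t"
    using t' by blast
next
  assume "has_next a t \<and> u = next_index a t"
  then show "link E x t u"
    using queue_point_link_next by blast
qed

lemma queue_point_label: "label E x = a"
proof
  fix i
  obtain b where b: "(link E x)\<^sup>*\<^sup>* i b" "\<forall>c. \<not> link E x b c" "label E x i = coord_rank x b"
    using link_chain_end by blast
  have "\<not> has_next a b"
    using b(2) queue_point_link_iff by blast
  then have "label E x i = a b"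
    using b(3) queue_rankingD(3)[OF queue] unfolding coord_rank_queue_point by simp
  moreover have "a i = a b"
    using b(1)
  proof (induction rule: rtranclp_induct)
    case (step u v)
    then show ?case
      using queue_point_link_iff next_index(2) by metis
  qed simp
  ultimately show "label E x i = a i"
    by simp
qed

end

lemma exists_generic_with_label:
  fixes a :: "'n::{finite,linorder} \<Rightarrow> nat"
  assumes "parking_function a" "good_vec E a"
  shows "\<exists>x. generic E x \<and> label E x = a"
proof -
  obtain r where r: "queue_ranking a r"
    using queue_ranking_exists[OF assms(1)] by blast
  obtain y where y: "realises (queue_reach a r) CARD('n) y"
    using realises_exists[OF queue_reach_ge mono_queue_reach] by blast
  define x :: "real^('n::{finite,linorder})" where "x = (\<chi> i. y (r i))"
  have "\<And>i. x$i = y (r i)"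
    unfolding x_def by simp
  then show ?thesis
    using queue_point_generic[OF r assms(2) y] queue_point_label[OF r assms(2) y] by blast
qed

section \<open>Regions and good cosets\<close>

lemma label_in_zvecs: "label E (x::real^('n::{finite,linorder})) \<in> zvecs"
  unfolding zvecs_def using label_less_card[of E x] by (simp add: less_SucI)

lemma label_coset_eq_iff:
  fixes x y :: "real^('n::{finite,linorder})"
  assumes "inj (($) x)" "inj (($) y)"
  shows "cosetrel `` {label E x} = cosetrel `` {label E y} \<longleftrightarrow> label E x = label E y"
proof
  assume "cosetrel `` {label E x} = cosetrel `` {label E y}"
  then have "(label E y, label E x) \<in> cosetrel"
    using eq_equiv_class_iff[OF cosetrel_equiv label_in_zvecs label_in_zvecs] by blast
  then obtain c where "\<And>i. label E x i = (label E y i + c) mod (CARD('n) + 1)"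
    unfolding cosetrel_def by blast
  then show "label E x = label E y"
    by (rule parking_function_shift_unique[OF label_parking_function[OF assms(2)] label_in_zvecs
          label_parking_function[OF assms(1)]])
qed simp

lemma image_label_coset:
  fixes E :: "('n::{finite,linorder}) set set"
  shows "(\<lambda>x. cosetrel `` {label E x}) ` {x. generic E x} = good_cosets E"
proof (intro subset_antisym subsetI)
  fix D assume "D \<in> (\<lambda>x. cosetrel `` {label E x}) ` {x. generic E x}"
  then obtain x where x: "generic E x" and D: "D = cosetrel `` {label E x}"
    by blast
  have "D \<in> cosets"
    unfolding D cosets_def using label_in_zvecs by (rule quotientI)
  moreover have "good_vec E b" if "b \<in> D" for b
    using that x label_good good_vec_cosetrel unfolding D generic_def by blast
  ultimately show "D \<in> good_cosets E"
    unfolding good_cosets_def by blast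
next
  fix D assume D: "D \<in> good_cosets E"
  then obtain a0 where a0: "a0 \<in> zvecs" "D = cosetrel `` {a0}"
    unfolding good_cosets_def cosets_def by (auto elim: quotientE)
  obtain c where "parking_function (\<lambda>i. (a0 i + c) mod (CARD('n) + 1))"
    using parking_function_shift_exists[OF a0(1)] by blast
  moreover define a where "a = (\<lambda>i. (a0 i + c) mod (CARD('n) + 1))"
  ultimately have a: "parking_function a"
    by simp
  have "(a0, a) \<in> cosetrel"
    using a0(1) unfolding cosetrel_def a_def zvecs_def by auto
  then have "a \<in> D" "D = cosetrel `` {a}"
    using a0(2) equiv_class_eq[OF cosetrel_equiv] by auto
  moreover have "good_vec E a"
    using D \<open>a \<in> D\<close> unfolding good_cosets_def by blast
  then obtain x where "generic E x" "label E x = a"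
    using exists_generic_with_label[OF a] by blast
  ultimately show "D \<in> (\<lambda>x. cosetrel `` {label E x}) ` {x. generic E x}"
    by auto
qed

lemma label_coset_eq_iff_connected:
  assumes x: "generic E x" and y: "generic E y"
  shows "cosetrel `` {label E x} = cosetrel `` {label E y} \<longleftrightarrow>
    y \<in> connected_component_set {z. generic E z} x"
proof -
  have "cosetrel `` {label E x} = cosetrel `` {label E y} \<longleftrightarrow> label E x = label E y"
    using x y unfolding generic_def by (intro label_coset_eq_iff) auto
  also have "\<dots> \<longleftrightarrow> same_side E x y"
    using x y by (rule label_eq_iff_same_side)
  also have "\<dots> \<longleftrightarrow> y \<in> connected_component_set {z. generic E z} x"
    using connected_component_generic[OF x] y by simp
  finally show ?thesis .
qed

theorem theorem1p2:
  fixes E :: "('n::{finite,linorder}) set set"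
  assumes "simple_graph_edges E"
  shows "\<exists>f. bij_betw f (regions (arrS E)) (good_cosets E)"
proof -
  have "\<exists>f. bij_betw f (components {x. generic E x}) (good_cosets E)"
    using bij_betw_components[OF label_coset_eq_iff_connected image_label_coset] by simp
  then show ?thesis
    unfolding regions_def complement_arrS .
qed

end
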